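(* Let $\mathbb{F}=\mathbb{R}$ or $\mathbb{C}$ and let $\{\mathcal{W}_i\}_{i=1}^n$ be a collection of $m$-dimensional subspaces of $\mathbb{F}^k$. Consider the collection of orthogonal complements $\{\mathcal{W}_i^\perp\}_{i=1}^n$, which are $(k-m)$-dimensional subspaces of $\mathbb{F}^k$. Then: (1) $\{\mathcal{W}_i\}_{i=1}^n$ is a tight fusion frame if and only if $\{\mathcal{W}_i^\perp\}_{i=1}^n$ is a tight fusion frame; (2) $\{\mathcal{W}_i\}_{i=1}^n$ is an equichordal tight fusion frame if and only if $\{\mathcal{W}_i^\perp\}_{i=1}^n$ is an equichordal tight fusion frame; (3) $\{\mathcal{W}_i\}_{i=1}^n$ is a strongly simplicial tight fusion frame if and only if $\{\mathcal{W}_i^\perp\}_{i=1}^n$ is a strongly simplicial tight fusion frame; (4) $\{\mathcal{W}_i\}_{i=1}^n$ is an orthoplectic Grassmannian packing if and only if $\{\mathcal{W}_i^\perp\}_{i=1}^n$ is an orthoplectic Grassmannian packing.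
   Context: For $d$-dimensional subspaces $\{\mathcal{V}_i\}_{i=1}^n$ of $\mathbb{F}^k$ let $L_i$ be a matrix whose columns form an orthonormal basis of $\mathcal{V}_i$ and $P_i=L_iL_i^*$. Chordal distance: $d_c(\mathcal{V}_i,\mathcal{V}_j)=[d-\operatorname{trace}(P_iP_j)]^{1/2}$. The collection is a tight fusion frame if $\sum_iP_i=AI_k$ for some $A>0$; equichordal if $\operatorname{trace}(L_i^*L_jL_j^*L_i)$ is the same for all $i\ne j$; strongly simplicial if $L_i^*L_jL_j^*L_i$ has the same set of eigenvalues for all $i\ne j$. Let $\mathcal{Z}(\mathbb{C},k)=k^2$, $\mathcal{Z}(\mathbb{R},k)=k(k+1)/2$. The collection is an orthoplectic Grassmannian packing if $\mathcal{Z}(\mathbb{F},k)<n\le 2(\mathcal{Z}(\mathbb{F},k)-1)$ and $\min_{i\ne j}d_c^2(\mathcal{V}_i,\mathcal{V}_j)=d(k-d)/k$. *)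

theory Defs
  imports "Jordan_Normal_Form.Jordan_Normal_Form" "Jordan_Normal_Form.Schur_Decomposition"
begin

definition mat_trace :: "'a :: comm_ring_1 mat \<Rightarrow> 'a" where
  "mat_trace A = (\<Sum>i<dim_row A. A $$ (i, i))"

(* Subspaces of F^k are sets of vectors in carrier_vec k; F = real or complex. *)
definition onb_mat :: "nat \<Rightarrow> nat \<Rightarrow> 'a :: conjugatable_field vec set \<Rightarrow> 'a mat \<Rightarrow> bool" where
  "onb_mat k d W L \<longleftrightarrow> L \<in> carrier_mat k d \<and> mat_adjoint L * L = 1\<^sub>m d
      \<and> W = {L *\<^sub>v x | x. x \<in> carrier_vec d}"

definition subspace_dim :: "nat \<Rightarrow> nat \<Rightarrow> 'a :: conjugatable_field vec set \<Rightarrow> bool" where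
  "subspace_dim k d W \<longleftrightarrow> (\<exists>L. onb_mat k d W L)"

definition basis_mat :: "nat \<Rightarrow> nat \<Rightarrow> 'a :: conjugatable_field vec set \<Rightarrow> 'a mat" where
  "basis_mat k d W = (SOME L. onb_mat k d W L)"

definition proj_mat :: "nat \<Rightarrow> nat \<Rightarrow> 'a :: conjugatable_field vec set \<Rightarrow> 'a mat" where
  "proj_mat k d W = basis_mat k d W * mat_adjoint (basis_mat k d W)"

definition perp :: "nat \<Rightarrow> 'a :: conjugatable_field vec set \<Rightarrow> 'a vec set" where
  "perp k W = {v \<in> carrier_vec k. \<forall>w\<in>W. v \<bullet>c w = 0}"

definition cross_mat :: "nat \<Rightarrow> nat \<Rightarrow> 'a :: conjugatable_field vec set \<Rightarrow> 'a vec set \<Rightarrow> 'a mat" where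
  "cross_mat k d V U = mat_adjoint (basis_mat k d V) * basis_mat k d U
       * mat_adjoint (basis_mat k d U) * basis_mat k d V"

(* squared chordal distance d_c^2 = d - trace(P_i P_j) (real-valued; an element of F) *)
definition chordal_sq :: "nat \<Rightarrow> nat \<Rightarrow> 'a :: conjugatable_field vec set \<Rightarrow> 'a vec set \<Rightarrow> 'a" where
  "chordal_sq k d V U = of_nat d - mat_trace (proj_mat k d V * proj_mat k d U)"

(* sum_{i=1}^n P_i = A I_k for some A > 0 (for F = complex, 0 < A means A is a positive real) *)
definition tight_fusion_frame :: "nat \<Rightarrow> nat \<Rightarrow> nat \<Rightarrow> (nat \<Rightarrow> 'a :: conjugatable_ordered_field vec set) \<Rightarrow> bool" where
  "tight_fusion_frame k d n W \<longleftrightarrow>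
     (\<exists>A. 0 < A \<and> mat k k (\<lambda>(a,b). \<Sum>i\<in>{1..n}. proj_mat k d (W i) $$ (a,b)) = A \<cdot>\<^sub>m 1\<^sub>m k)"

definition equichordal :: "nat \<Rightarrow> nat \<Rightarrow> nat \<Rightarrow> (nat \<Rightarrow> 'a :: conjugatable_field vec set) \<Rightarrow> bool" where
  "equichordal k d n W \<longleftrightarrow>
     (\<exists>c. \<forall>i\<in>{1..n}. \<forall>j\<in>{1..n}. i \<noteq> j \<longrightarrow> mat_trace (cross_mat k d (W i) (W j)) = c)"

definition same_eigenvalues :: "'a :: field mat \<Rightarrow> 'a mat \<Rightarrow> bool" where
  "same_eigenvalues A B \<longleftrightarrow> (\<forall>e. Polynomial.order e (char_poly A) = Polynomial.order e (char_poly B))"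

definition strongly_simplicial :: "nat \<Rightarrow> nat \<Rightarrow> nat \<Rightarrow> (nat \<Rightarrow> 'a :: conjugatable_field vec set) \<Rightarrow> bool" where
  "strongly_simplicial k d n W \<longleftrightarrow>
     (\<forall>i\<in>{1..n}. \<forall>j\<in>{1..n}. \<forall>i'\<in>{1..n}. \<forall>j'\<in>{1..n}. i \<noteq> j \<longrightarrow> i' \<noteq> j' \<longrightarrow>
        same_eigenvalues (cross_mat k d (W i) (W j)) (cross_mat k d (W i') (W j')))"

(* Z = Z(F,k) is passed explicitly: k^2 for complex, k(k+1)/2 for real.
   min_{i<>j} d_c^2 = d(k-d)/k is stated as: attained by some pair and a lower bound for all pairs. *)
definition orthoplectic_packing :: "nat \<Rightarrow> nat \<Rightarrow> nat \<Rightarrow> nat \<Rightarrow> (nat \<Rightarrow> 'a :: conjugatable_ordered_field vec set) \<Rightarrow> bool" where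
  "orthoplectic_packing Z k d n W \<longleftrightarrow> Z < n \<and> n \<le> 2 * (Z - 1) \<and>
     (let c = (of_nat (d * (k - d)) / of_nat k :: 'a) in
       (\<forall>i\<in>{1..n}. \<forall>j\<in>{1..n}. i \<noteq> j \<longrightarrow> c \<le> chordal_sq k d (W i) (W j)) \<and>
       (\<exists>i\<in>{1..n}. \<exists>j\<in>{1..n}. i \<noteq> j \<and> chordal_sq k d (W i) (W j) = c))"

definition complement_duality :: "nat \<Rightarrow> nat \<Rightarrow> nat \<Rightarrow> nat \<Rightarrow> (nat \<Rightarrow> 'a :: conjugatable_ordered_field vec set) \<Rightarrow> bool" where
  "complement_duality Z k m n W \<longleftrightarrow>
     (let W' = (\<lambda>i. perp k (W i)) in
      (\<forall>i\<in>{1..n}. subspace_dim k (k - m) (W' i)) \<and>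
      (tight_fusion_frame k m n W \<longleftrightarrow> tight_fusion_frame k (k - m) n W') \<and>
      (tight_fusion_frame k m n W \<and> equichordal k m n W \<longleftrightarrow>
         tight_fusion_frame k (k - m) n W' \<and> equichordal k (k - m) n W') \<and>
      (tight_fusion_frame k m n W \<and> strongly_simplicial k m n W \<longleftrightarrow>
         tight_fusion_frame k (k - m) n W' \<and> strongly_simplicial k (k - m) n W') \<and>
      (orthoplectic_packing Z k m n W \<longleftrightarrow> orthoplectic_packing Z k (k - m) n W'))"

end

theory Submission
  imports Defs
begin

text \<open>If the columns of \<open>L\<close> are an orthonormal basis of \<open>W\<close> and those of \<open>L'\<close> one of
  \<open>W\<^sup>\<perp>\<close>, then \<open>L L\<^sup>* + L' L'\<^sup>* = I\<close>: the projection onto \<open>W\<^sup>\<perp>\<close> is \<open>I - P\<close>.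
  Everything follows from this identity. Summing it, \<open>\<Sum> P\<^sub>i = A I\<close> turns into
  \<open>\<Sum> P'\<^sub>i = (n - A) I\<close>, and \<open>n - A > 0\<close> because taking traces gives \<open>k A = n m\<close> with \<open>m < k\<close>.
  Expanding \<open>tr ((I - P\<^sub>i) (I - P\<^sub>j)) = k - 2m + tr (P\<^sub>i P\<^sub>j)\<close> shows that chordal distances are
  unchanged and traces of the cross matrices are shifted by a constant. Finally, with
  \<open>A = L\<^sub>i\<^sup>* L\<^sub>j\<close> and \<open>Y = L'\<^sub>i\<^sup>* L\<^sub>j\<close> the two cross matrices are \<open>A A\<^sup>*\<close> and \<open>I - Y Y\<^sup>*\<close>, while
  \<open>A\<^sup>* A = I - Y\<^sup>* Y\<close>; since \<open>X Z\<close> and \<open>Z X\<close> have the same nonzero eigenvalues, the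
  eigenvalue multiplicities of the complementary cross matrices are those of the original ones
  reflected by \<open>\<lambda> \<mapsto> 1 - \<lambda>\<close>, up to a fixed number of additional eigenvalues \<open>1\<close>.\<close>

section \<open>Matrix adjoints and traces\<close>

lemma conjugate_one[simp]: "conjugate (1 :: 'a :: conjugatable_field) = 1"
  using conjugate_dist_mul[of 1 "conjugate (1 :: 'a)"] by simp

lemma zero_less_one_conjugatable: "0 < (1 :: 'a :: conjugatable_ordered_field)"
  using conjugate_square_greater_0[of "1 :: 'a"] by simp

lemma cscalar_prod_swap:
  fixes v w :: "'a :: conjugatable_field vec"
  assumes "v \<in> carrier_vec n" "w \<in> carrier_vec n"
  shows "w \<bullet>c v = conjugate (v \<bullet>c w)"
  using assms by (simp add: conjugate_vec_sprod_comm)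

lemma mat_adjoint_carrier[simp]: "A \<in> carrier_mat r c \<Longrightarrow> mat_adjoint A \<in> carrier_mat c r"
  unfolding mat_adjoint_def by auto

lemma dim_mat_adjoint[simp]:
  "dim_row (mat_adjoint A) = dim_col A" "dim_col (mat_adjoint A) = dim_row A"
  unfolding mat_adjoint_def by auto

lemma index_mat_adjoint[simp]:
  "i < dim_col A \<Longrightarrow> j < dim_row A \<Longrightarrow> mat_adjoint A $$ (i, j) = conjugate (A $$ (j, i))"
  unfolding mat_adjoint_def by (auto simp: mat_of_rows_index)

lemma mat_adjoint_mat_adjoint[simp]: "mat_adjoint (mat_adjoint A) = A"
  by (rule eq_matI) auto

lemma mat_adjoint_mult:
  fixes A :: "'a :: conjugatable_field mat"
  assumes "A \<in> carrier_mat r n" "B \<in> carrier_mat n c"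
  shows "mat_adjoint (A * B) = mat_adjoint B * mat_adjoint A"
  using assms
  by (intro eq_matI) (auto simp: scalar_prod_def sum_conjugate conjugate_dist_mul mult.commute)

lemma index_mat_adjoint_mult:
  fixes A B :: "'a :: conjugatable_field mat"
  assumes "dim_row A = dim_row B" "i < dim_col A" "j < dim_col B"
  shows "(mat_adjoint A * B) $$ (i, j) = col B j \<bullet>c col A i"
  using assms by (auto simp: scalar_prod_def mult.commute intro!: sum.cong)

lemma index_mat_adjoint_mult_vec:
  fixes A :: "'a :: conjugatable_field mat"
  assumes "w \<in> carrier_vec (dim_row A)" "i < dim_col A"
  shows "(mat_adjoint A *\<^sub>v w) $ i = w \<bullet>c col A i"
  using assms by (auto simp: scalar_prod_def mult.commute intro!: sum.cong)

lemma cscalar_prod_mult_mat_vec: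
  fixes L :: "'a :: conjugatable_field mat"
  assumes L: "L \<in> carrier_mat k m" and w: "w \<in> carrier_vec k" and x: "x \<in> carrier_vec m"
  shows "w \<bullet>c (L *\<^sub>v x) = (mat_adjoint L *\<^sub>v w) \<bullet>c x"
proof -
  have "w \<bullet>c (L *\<^sub>v x) = (\<Sum>a<k. \<Sum>j<m. w $ a * conjugate (L $$ (a, j)) * conjugate (x $ j))"
    using assms by (auto simp: scalar_prod_def mult_mat_vec_def sum_conjugate conjugate_dist_mul
        sum_distrib_left mult.assoc atLeast0LessThan intro!: sum.cong)
  also have "\<dots> = (\<Sum>j<m. \<Sum>a<k. w $ a * conjugate (L $$ (a, j)) * conjugate (x $ j))"
    by (rule sum.swap)
  also have "\<dots> = (mat_adjoint L *\<^sub>v w) \<bullet>c x"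
    using assms by (auto simp: scalar_prod_def mult_mat_vec_def atLeast0LessThan sum_distrib_left
        mult_ac intro!: sum.cong)
  finally show ?thesis .
qed

lemma mult_mat_vec_zero:
  "A \<in> carrier_mat n m \<Longrightarrow> A *\<^sub>v 0\<^sub>v m = (0\<^sub>v n :: 'a :: semiring_0 vec)"
  by (intro eq_vecI) (auto simp: scalar_prod_def)

lemma zero_mult_mat_vec:
  "v \<in> carrier_vec m \<Longrightarrow> 0\<^sub>m n m *\<^sub>v v = (0\<^sub>v n :: 'a :: semiring_0 vec)"
  by (intro eq_vecI) auto

lemma eq_mat_by_mult_vecI:
  fixes A B :: "'a :: semiring_1 mat"
  assumes "A \<in> carrier_mat r c" "B \<in> carrier_mat r c"
    and "\<And>v. v \<in> carrier_vec c \<Longrightarrow> A *\<^sub>v v = B *\<^sub>v v"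
  shows "A = B"
proof (rule eq_matI)
  fix i j assume "i < dim_row B" "j < dim_col B"
  moreover have "(A *\<^sub>v unit_vec c j) $ i = (B *\<^sub>v unit_vec c j) $ i"
    using assms(3)[of "unit_vec c j"] by simp
  ultimately show "A $$ (i, j) = B $$ (i, j)"
    using assms(1,2) by simp
qed (use assms in auto)

lemma mat_trace_mult_comm:
  fixes A :: "'a :: comm_ring_1 mat"
  assumes "A \<in> carrier_mat r c" "B \<in> carrier_mat c r"
  shows "mat_trace (A * B) = mat_trace (B * A)"
proof -
  have "mat_trace (A * B) = (\<Sum>i<r. \<Sum>j<c. A $$ (i, j) * B $$ (j, i))"
    unfolding mat_trace_def using assms by (auto simp: scalar_prod_def intro!: sum.cong)
  also have "\<dots> = (\<Sum>j<c. \<Sum>i<r. B $$ (j, i) * A $$ (i, j))"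
    by (subst sum.swap) (simp add: mult.commute)
  also have "\<dots> = mat_trace (B * A)"
    unfolding mat_trace_def using assms by (auto simp: scalar_prod_def intro!: sum.cong)
  finally show ?thesis .
qed

lemma mat_trace_one_minus_mult:
  fixes P :: "'a :: comm_ring_1 mat"
  assumes "P \<in> carrier_mat k k" "Q \<in> carrier_mat k k"
  shows "mat_trace ((1\<^sub>m k - P) * (1\<^sub>m k - Q))
    = of_nat k - mat_trace P - mat_trace Q + mat_trace (P * Q)"
proof -
  have "((1\<^sub>m k - P) * (1\<^sub>m k - Q)) $$ (a, a) = 1 - P $$ (a, a) - Q $$ (a, a) + (P * Q) $$ (a, a)"
    if "a < k" for a
    using assms that
    by (simp add: scalar_prod_def atLeast0LessThan algebra_simps sum.distrib sum_subtractf
        if_distrib[where f = "\<lambda>x. x * _"] if_distrib[where f = "\<lambda>x. _ * x"] cong: if_cong)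
  then show ?thesis
    using assms unfolding mat_trace_def by (simp add: sum.distrib sum_subtractf)
qed

section \<open>Orthonormal lists and orthogonal complements\<close>

text \<open>What the argument needs of \<open>\<real>\<close> and \<open>\<complex>\<close> (with the partial order of \<open>\<complex>\<close>) beyond
  \<open>conjugatable_ordered_field\<close>: nonzero vectors can be normalised, and scaling by a positive
  integer neither creates nor destroys positivity.\<close>

class conjugatable_euclidean_field = conjugatable_ordered_field +
  assumes normalize_positive: "0 < x \<Longrightarrow> \<exists>r. r * conjugate r * x = 1"
    and of_nat_mult_pos_iff: "0 < n \<Longrightarrow> 0 < of_nat n * x \<longleftrightarrow> 0 < x"

instance real :: conjugatable_euclidean_field
proof
  fix x :: real and n :: nat
  show "0 < x \<Longrightarrow> \<exists>r. r * conjugate r * x = 1"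
    by (rule exI[of _ "1 / sqrt x"]) (simp add: field_simps)
  show "0 < n \<Longrightarrow> 0 < real n * x \<longleftrightarrow> 0 < x"
    by (simp add: zero_less_mult_iff)
qed

instance complex :: conjugatable_euclidean_field
proof
  fix x :: complex and n :: nat
  show "0 < x \<Longrightarrow> \<exists>r. r * conjugate r * x = 1"
  proof -
    assume "0 < x"
    then have x: "x = complex_of_real (Re x)" "0 < Re x"
      by (auto simp: less_complex_def complex_eq_iff)
    have "complex_of_real (1 / sqrt (Re x)) * cnj (complex_of_real (1 / sqrt (Re x))) * x
      = complex_of_real (1 / sqrt (Re x) * (1 / sqrt (Re x)) * Re x)"
      by (subst x(1)) (simp only: complex_cnj_complex_of_real of_real_mult)
    also have "\<dots> = 1"
      using x(2) by simp
    finally show ?thesis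
      unfolding conjugate_complex_def by (rule exI)
  qed
  show "0 < n \<Longrightarrow> 0 < of_nat n * x \<longleftrightarrow> 0 < x"
    by (auto simp: less_complex_def zero_less_mult_iff)
qed

definition orthonormal :: "nat \<Rightarrow> 'a :: conjugatable_field vec list \<Rightarrow> bool" where
  "orthonormal k vs \<longleftrightarrow> set vs \<subseteq> carrier_vec k \<and>
     (\<forall>i<length vs. \<forall>j<length vs. vs ! j \<bullet>c vs ! i = of_bool (i = j))"

lemma orthonormal_iff_mat_of_cols:
  assumes "set vs \<subseteq> carrier_vec k"
  shows "orthonormal k vs \<longleftrightarrow>
    mat_adjoint (mat_of_cols k vs) * mat_of_cols k vs = 1\<^sub>m (length vs)"
proof -
  have "(mat_adjoint (mat_of_cols k vs) * mat_of_cols k vs) $$ (i, j) = vs ! j \<bullet>c vs ! i"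
    if "i < length vs" "j < length vs" for i j
  proof -
    have "vs ! i \<in> carrier_vec k" "vs ! j \<in> carrier_vec k"
      using assms that by auto
    then show ?thesis
      using that by (subst index_mat_adjoint_mult) auto
  qed
  then show ?thesis
    using assms unfolding orthonormal_def mat_eq_iff by auto
qed

lemma orthonormal_append:
  "orthonormal k (us @ vs) \<longleftrightarrow>
    orthonormal k us \<and> orthonormal k vs \<and> (\<forall>u\<in>set us. \<forall>v\<in>set vs. v \<bullet>c u = 0)"
  (is "?lhs \<longleftrightarrow> ?rhs")
proof
  assume ?lhs
  then have carrier: "set (us @ vs) \<subseteq> carrier_vec k"
    and orth: "\<And>i j. i < length (us @ vs) \<Longrightarrow> j < length (us @ vs) \<Longrightarrow>
      (us @ vs) ! j \<bullet>c (us @ vs) ! i = of_bool (i = j)"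
    unfolding orthonormal_def by auto
  have "orthonormal k us"
    unfolding orthonormal_def
  proof (intro conjI allI impI)
    fix i j assume "i < length us" "j < length us"
    then show "us ! j \<bullet>c us ! i = of_bool (i = j)"
      using orth[of i j] by (simp add: nth_append)
  qed (use carrier in auto)
  moreover have "orthonormal k vs"
    unfolding orthonormal_def
  proof (intro conjI allI impI)
    fix i j assume "i < length vs" "j < length vs"
    then show "vs ! j \<bullet>c vs ! i = of_bool (i = j)"
      using orth[of "length us + i" "length us + j"] by (simp add: nth_append)
  qed (use carrier in auto)
  moreover have "v \<bullet>c u = 0" if u: "u \<in> set us" and v: "v \<in> set vs" for u v
  proof -
    obtain i where "i < length us" "us ! i = u"
      using u by (auto simp: in_set_conv_nth)
    moreover obtain j where "j < length vs" "vs ! j = v"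
      using v by (auto simp: in_set_conv_nth)
    ultimately
    show ?thesis
      using orth[of i "length us + j"] by (simp add: nth_append)
  qed
  ultimately show ?rhs by blast
next
  assume ?rhs
  then have carrier: "set us \<subseteq> carrier_vec k" "set vs \<subseteq> carrier_vec k"
    and orth_us: "\<And>i j. i < length us \<Longrightarrow> j < length us \<Longrightarrow> us ! j \<bullet>c us ! i = of_bool (i = j)"
    and orth_vs: "\<And>i j. i < length vs \<Longrightarrow> j < length vs \<Longrightarrow> vs ! j \<bullet>c vs ! i = of_bool (i = j)"
    and cross: "\<And>i j. i < length us \<Longrightarrow> j < length vs \<Longrightarrow> vs ! j \<bullet>c us ! i = 0"
    unfolding orthonormal_def by auto
  have cross': "us ! i \<bullet>c vs ! j = 0" if "i < length us" "j < length vs" for i j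
  proof -
    have "us ! i \<in> carrier_vec k" "vs ! j \<in> carrier_vec k"
      using carrier that by auto
    then show ?thesis
      using cross[OF that] cscalar_prod_swap[of "vs ! j" k "us ! i"] by simp
  qed
  show ?lhs
    unfolding orthonormal_def
  proof (intro conjI allI impI)
    fix i j assume "i < length (us @ vs)" "j < length (us @ vs)"
    then show "(us @ vs) ! j \<bullet>c (us @ vs) ! i = of_bool (i = j)"
      by (cases "i < length us"; cases "j < length us")
        (auto simp: nth_append orth_us orth_vs cross cross')
  qed (use carrier in auto)
qed

lemma mult_mat_adjoint_neq_one:
  fixes L :: "'a :: conjugatable_field mat"
  assumes L: "L \<in> carrier_mat k m" and "m < k"
  shows "L * mat_adjoint L \<noteq> 1\<^sub>m k"
proof
  assume one: "L * mat_adjoint L = 1\<^sub>m k"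
  \<comment> \<open>Padding \<open>L\<close> with zero columns would give a square matrix with orthonormal rows, hence
    orthonormal columns, yet with a zero column.\<close>
  define L0 where "L0 = mat k k (\<lambda>(i, j). if j < m then L $$ (i, j) else 0)"
  have L0: "L0 \<in> carrier_mat k k" unfolding L0_def by simp
  have "(L0 * mat_adjoint L0) $$ (a, b) = (L * mat_adjoint L) $$ (a, b)" if "a < k" "b < k" for a b
  proof -
    have "(L0 * mat_adjoint L0) $$ (a, b) = (\<Sum>c<k. L0 $$ (a, c) * conjugate (L0 $$ (b, c)))"
      using that L0 by (simp add: scalar_prod_def atLeast0LessThan)
    also have "\<dots> = (\<Sum>c<m. L $$ (a, c) * conjugate (L $$ (b, c)))"
      using that \<open>m < k\<close> by (intro sum.mono_neutral_cong_right) (auto simp: L0_def)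
    also have "\<dots> = (L * mat_adjoint L) $$ (a, b)"
      using that L by (simp add: scalar_prod_def atLeast0LessThan)
    finally show ?thesis .
  qed
  then have "L0 * mat_adjoint L0 = 1\<^sub>m k"
    using L L0 one by (simp add: mat_eq_iff)
  then have "mat_adjoint L0 * L0 = 1\<^sub>m k"
    using mat_mult_left_right_inverse[OF L0 mat_adjoint_carrier[OF L0]] by blast
  then have "col L0 (k - 1) \<bullet>c col L0 (k - 1) = 1"
    using index_mat_adjoint_mult[of L0 L0 "k - 1" "k - 1"] L0 \<open>m < k\<close> by simp
  moreover have "col L0 (k - 1) = 0\<^sub>v k"
    using \<open>m < k\<close> by (auto simp: L0_def)
  ultimately show False
    by (metis conjugate_zero_vec scalar_prod_left_zero zero_carrier_vec zero_neq_one)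
qed

lemma exists_orthonormal_snoc:
  fixes us :: "'a :: conjugatable_euclidean_field vec list"
  assumes us: "orthonormal k us" and len: "length us < k"
  shows "\<exists>u. orthonormal k (us @ [u])"
proof -
  define L where "L = mat_of_cols k us"
  have L: "L \<in> carrier_mat k (length us)" and LL: "mat_adjoint L * L = 1\<^sub>m (length us)"
    using us orthonormal_iff_mat_of_cols[of us k] unfolding L_def orthonormal_def by auto
  obtain v where v: "v \<in> carrier_vec k" and Pv: "L *\<^sub>v (mat_adjoint L *\<^sub>v v) \<noteq> v"
  proof (rule ccontr)
    assume "\<not> thesis"
    then have "\<And>v. v \<in> carrier_vec k \<Longrightarrow> L *\<^sub>v (mat_adjoint L *\<^sub>v v) = v"
      using that by blast
    then have "L * mat_adjoint L = 1\<^sub>m k"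
      using L
      by (intro eq_mat_by_mult_vecI[of _ k k]) (auto simp: assoc_mult_mat_vec[of _ k "length us" _ k])
    then show False
      using mult_mat_adjoint_neq_one[OF L len] by blast
  qed
  define x where "x = mat_adjoint L *\<^sub>v v"
  define w where "w = v - L *\<^sub>v x"
  have x: "x \<in> carrier_vec (length us)" and Lx: "L *\<^sub>v x \<in> carrier_vec k"
    using v L unfolding x_def carrier_vec_def by simp_all
  have w: "w \<in> carrier_vec k"
    using v Lx unfolding w_def by simp
  have "w \<noteq> 0\<^sub>v k"
  proof
    assume "w = 0\<^sub>v k"
    then have "v = L *\<^sub>v x"
      using v Lx unfolding w_def by (auto simp: vec_eq_iff)
    with Pv show False
      unfolding x_def by simp
  qed
  then obtain r where r: "r * conjugate r * (w \<bullet>c w) = 1"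
    using normalize_positive[of "w \<bullet>c w"] w by auto
  define u where "u = r \<cdot>\<^sub>v w"
  have "mat_adjoint L *\<^sub>v w = x - (mat_adjoint L * L) *\<^sub>v x"
    using mult_minus_distrib_mat_vec[OF mat_adjoint_carrier[OF L] v Lx] L x
    unfolding w_def x_def[symmetric]
    by (simp add: assoc_mult_mat_vec[of _ "length us" k _ "length us"])
  then have Lw: "mat_adjoint L *\<^sub>v w = 0\<^sub>v (length us)"
    using x LL by simp
  have "u \<bullet>c us ! j = 0" if j: "j < length us" for j
  proof -
    have uj: "us ! j \<in> carrier_vec k"
      using us j unfolding orthonormal_def by auto
    then have "w \<bullet>c us ! j = (mat_adjoint L *\<^sub>v w) $ j"
      using index_mat_adjoint_mult_vec[of w L j] w j unfolding L_def by simp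
    then show ?thesis
      using Lw j w uj unfolding u_def by simp
  qed
  then have "\<forall>x\<in>set us. u \<bullet>c x = 0"
    by (auto simp: in_set_conv_nth)
  moreover have "u \<bullet>c u = 1"
    using w r unfolding u_def by (simp add: conjugate_smult_vec mult.left_commute mult.assoc)
  then have "orthonormal k [u]"
    using w unfolding orthonormal_def u_def by simp
  ultimately show ?thesis
    using us orthonormal_append[of k us "[u]"] by auto
qed

lemma exists_orthonormal_completion:
  fixes us :: "'a :: conjugatable_euclidean_field vec list"
  assumes "orthonormal k us" and "length us \<le> k"
  shows "\<exists>vs. length (us @ vs) = k \<and> orthonormal k (us @ vs)"
  using assms
proof (induction "k - length us" arbitrary: us)
  case 0
  then show ?case
    by (intro exI[of _ "[]"]) auto
next
  case (Suc d)
  obtain u where u: "orthonormal k (us @ [u])"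
    using exists_orthonormal_snoc Suc by fastforce
  have "d = k - length (us @ [u])" "length (us @ [u]) \<le> k"
    using Suc.hyps(2) by auto
  then obtain vs where "length ((us @ [u]) @ vs) = k" "orthonormal k ((us @ [u]) @ vs)"
    using Suc.hyps(1) u by blast
  then show ?case
    by (intro exI[of _ "u # vs"]) auto
qed

lemma mat_of_cols_mult_adjoint_index:
  fixes vs :: "'a :: conjugatable_field vec list"
  assumes "set vs \<subseteq> carrier_vec k" "a < k" "b < k"
  shows "(mat_of_cols k vs * mat_adjoint (mat_of_cols k vs)) $$ (a, b)
    = (\<Sum>v\<leftarrow>vs. v $ a * conjugate (v $ b))"
  using assms by (simp add: scalar_prod_def sum_list_sum_nth mat_of_cols_index atLeast0LessThan)

lemma mat_of_cols_append_mult_adjoint: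
  fixes us vs :: "'a :: conjugatable_field vec list"
  assumes "set us \<subseteq> carrier_vec k" "set vs \<subseteq> carrier_vec k"
  shows "mat_of_cols k (us @ vs) * mat_adjoint (mat_of_cols k (us @ vs))
    = mat_of_cols k us * mat_adjoint (mat_of_cols k us)
    + mat_of_cols k vs * mat_adjoint (mat_of_cols k vs)"
proof (rule eq_matI)
  fix a b assume "a < dim_row (mat_of_cols k us * mat_adjoint (mat_of_cols k us)
    + mat_of_cols k vs * mat_adjoint (mat_of_cols k vs))"
    "b < dim_col (mat_of_cols k us * mat_adjoint (mat_of_cols k us)
    + mat_of_cols k vs * mat_adjoint (mat_of_cols k vs))"
  then have ab: "a < k" "b < k"
    by auto
  show "(mat_of_cols k (us @ vs) * mat_adjoint (mat_of_cols k (us @ vs))) $$ (a, b) =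
    (mat_of_cols k us * mat_adjoint (mat_of_cols k us)
    + mat_of_cols k vs * mat_adjoint (mat_of_cols k vs)) $$ (a, b)"
    using assms ab
    by (subst index_add_mat) (auto simp only: mat_of_cols_mult_adjoint_index set_append
        Un_subset_iff map_append sum_list_append mat_of_cols_carrier mult_carrier_mat
        index_mult_mat(2,3) dim_mat_adjoint)
qed auto

lemma orthonormal_basis_resolution:
  fixes us vs :: "'a :: conjugatable_field vec list"
  assumes orth: "orthonormal k (us @ vs)" and len: "length (us @ vs) = k"
  shows "mat_of_cols k us * mat_adjoint (mat_of_cols k us)
    + mat_of_cols k vs * mat_adjoint (mat_of_cols k vs) = 1\<^sub>m k"
proof -
  define U where "U = mat_of_cols k (us @ vs)"
  have U: "U \<in> carrier_mat k k"
    using len unfolding U_def by auto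
  have carrier: "set (us @ vs) \<subseteq> carrier_vec k"
    using orth unfolding orthonormal_def by blast
  have "mat_adjoint U * U = 1\<^sub>m k"
    using orth orthonormal_iff_mat_of_cols[OF carrier] len unfolding U_def by simp
  then have "U * mat_adjoint U = 1\<^sub>m k"
    using mat_mult_left_right_inverse[OF mat_adjoint_carrier[OF U] U] by blast
  then show ?thesis
    using carrier mat_of_cols_append_mult_adjoint[of us k vs] unfolding U_def by simp
qed

lemma perp_iff_mat_adjoint_mult_vec:
  fixes L :: "'a :: conjugatable_ordered_field mat"
  assumes onb: "onb_mat k m W L" and w: "w \<in> carrier_vec k"
  shows "w \<in> perp k W \<longleftrightarrow> mat_adjoint L *\<^sub>v w = 0\<^sub>v m"
proof -
  have L: "L \<in> carrier_mat k m" and W: "W = {L *\<^sub>v x | x. x \<in> carrier_vec m}"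
    using onb unfolding onb_mat_def by auto
  define z where "z = mat_adjoint L *\<^sub>v w"
  have z: "z \<in> carrier_vec m"
    using L w unfolding z_def carrier_vec_def by simp
  have "w \<in> perp k W \<longleftrightarrow> (\<forall>x\<in>carrier_vec m. z \<bullet>c x = 0)"
    using w L unfolding perp_def W z_def by (auto simp: cscalar_prod_mult_mat_vec)
  also have "\<dots> \<longleftrightarrow> z = 0\<^sub>v m"
    using z by (auto simp: conjugate_square_eq_0_vec)
  finally show ?thesis
    unfolding z_def .
qed

lemma onb_mat_perp_of_resolution:
  fixes L :: "'a :: conjugatable_ordered_field mat"
  assumes onb: "onb_mat k m W L" and L': "L' \<in> carrier_mat k s"
    and orth: "mat_adjoint L' * L' = 1\<^sub>m s" and cross: "mat_adjoint L * L' = 0\<^sub>m m s"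
    and resolution: "L * mat_adjoint L + L' * mat_adjoint L' = 1\<^sub>m k"
  shows "onb_mat k s (perp k W) L'"
proof -
  have L: "L \<in> carrier_mat k m"
    using onb unfolding onb_mat_def by blast
  have "perp k W = {L' *\<^sub>v x | x. x \<in> carrier_vec s}"
  proof (intro equalityI subsetI)
    fix v assume v: "v \<in> perp k W"
    then have vk: "v \<in> carrier_vec k"
      unfolding perp_def by blast
    have Lv: "mat_adjoint L *\<^sub>v v = 0\<^sub>v m"
      using perp_iff_mat_adjoint_mult_vec[OF onb vk] v by blast
    define y where "y = mat_adjoint L' *\<^sub>v v"
    have y: "y \<in> carrier_vec s"
      using L' vk unfolding y_def carrier_vec_def by simp
    have "v = (L * mat_adjoint L + L' * mat_adjoint L') *\<^sub>v v"
      using resolution vk by simp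
    also have "\<dots> = L *\<^sub>v (mat_adjoint L *\<^sub>v v) + L' *\<^sub>v y"
      using L L' vk unfolding y_def
      by (simp add: add_mult_distrib_mat_vec[of _ k k] assoc_mult_mat_vec[of _ k m _ k]
          assoc_mult_mat_vec[of _ k s _ k])
    also have "\<dots> = L' *\<^sub>v y"
      unfolding Lv using L L' y by (simp add: mult_mat_vec_zero)
    finally have "v = L' *\<^sub>v y" .
    with y show "v \<in> {L' *\<^sub>v x | x. x \<in> carrier_vec s}"
      by blast
  next
    fix v assume "v \<in> {L' *\<^sub>v x | x. x \<in> carrier_vec s}"
    then obtain x where x: "x \<in> carrier_vec s" and v: "v = L' *\<^sub>v x"
      by blast
    have vk: "v \<in> carrier_vec k"
      using L' x unfolding v by simp
    have "mat_adjoint L *\<^sub>v v = (mat_adjoint L * L') *\<^sub>v x"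
      using L L' x unfolding v by (simp add: assoc_mult_mat_vec[of _ m k _ s])
    then show "v \<in> perp k W"
      using perp_iff_mat_adjoint_mult_vec[OF onb vk] cross x by (simp add: zero_mult_mat_vec)
  qed
  then show ?thesis
    using L' orth unfolding onb_mat_def by blast
qed

lemma exists_onb_mat_perp:
  fixes L :: "'a :: conjugatable_euclidean_field mat"
  assumes onb: "onb_mat k m W L" and "m \<le> k"
  shows "\<exists>L'. onb_mat k (k - m) (perp k W) L' \<and> L * mat_adjoint L + L' * mat_adjoint L' = 1\<^sub>m k"
proof -
  have L: "L \<in> carrier_mat k m" and LL: "mat_adjoint L * L = 1\<^sub>m m"
    using onb unfolding onb_mat_def by auto
  define us where "us = cols L"
  have us: "set us \<subseteq> carrier_vec k" "length us = m" "mat_of_cols k us = L"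
    using L cols_dim[of L] unfolding us_def by auto
  then have "orthonormal k us"
    using orthonormal_iff_mat_of_cols LL by metis
  then obtain vs where len: "length (us @ vs) = k" and orth: "orthonormal k (us @ vs)"
    using exists_orthonormal_completion \<open>m \<le> k\<close> us(2) by metis
  define L' where "L' = mat_of_cols k vs"
  have L': "L' \<in> carrier_mat k (k - m)"
    using len us unfolding L'_def by auto
  have vs: "orthonormal k vs" and cross: "\<forall>u\<in>set us. \<forall>v\<in>set vs. v \<bullet>c u = 0"
    using orth orthonormal_append by blast+
  have orth': "mat_adjoint L' * L' = 1\<^sub>m (k - m)"
    using vs orthonormal_iff_mat_of_cols[of vs k] len us unfolding L'_def orthonormal_def by auto
  have cross': "mat_adjoint L * L' = 0\<^sub>m m (k - m)"
  proof (rule eq_matI)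
    fix i j
    assume ij: "i < dim_row (0\<^sub>m m (k - m) :: 'a mat)" "j < dim_col (0\<^sub>m m (k - m) :: 'a mat)"
    have "vs ! j \<in> carrier_vec k"
      using vs ij len us unfolding orthonormal_def by auto
    then have "(mat_adjoint L * L') $$ (i, j) = vs ! j \<bullet>c us ! i"
      using ij L L' len us index_mat_adjoint_mult[of L L' i j] unfolding L'_def us_def by simp
    moreover have "us ! i \<in> set us" "vs ! j \<in> set vs"
      using ij len us by auto
    ultimately show "(mat_adjoint L * L') $$ (i, j) = 0\<^sub>m m (k - m) $$ (i, j)"
      using cross ij by simp
  qed (use L L' in auto)
  have resolution: "L * mat_adjoint L + L' * mat_adjoint L' = 1\<^sub>m k"
    using orthonormal_basis_resolution[OF orth len] us unfolding L'_def by simp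
  show ?thesis
    using onb_mat_perp_of_resolution[OF onb L' orth' cross' resolution] resolution by blast
qed

lemma onb_mat_proj_fixes:
  fixes L :: "'a :: conjugatable_field mat"
  assumes "onb_mat k d V L" "v \<in> V"
  shows "L *\<^sub>v (mat_adjoint L *\<^sub>v v) = v"
proof -
  obtain x where x: "x \<in> carrier_vec d" and v: "v = L *\<^sub>v x"
    using assms unfolding onb_mat_def by blast
  have L: "L \<in> carrier_mat k d" and LL: "mat_adjoint L * L = 1\<^sub>m d"
    using assms(1) unfolding onb_mat_def by auto
  have "mat_adjoint L *\<^sub>v v = x"
    using L LL x unfolding v by (simp add: assoc_mult_mat_vec[of _ d k _ d, symmetric])
  then show ?thesis
    unfolding v by simp
qed

lemma onb_mat_proj_unique:
  fixes L M :: "'a :: conjugatable_field mat"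
  assumes onbL: "onb_mat k d V L" and onbM: "onb_mat k d V M"
  shows "L * mat_adjoint L = M * mat_adjoint M"
proof -
  have L: "L \<in> carrier_mat k d" and M: "M \<in> carrier_mat k d" and MM: "mat_adjoint M * M = 1\<^sub>m d"
    using assms unfolding onb_mat_def by auto
  define X where "X = mat_adjoint L * M"
  define Y where "Y = mat_adjoint M * L"
  have X: "X \<in> carrier_mat d d" and Y: "Y \<in> carrier_mat d d"
    using L M unfolding X_def Y_def by auto
  have LX: "L * X = M"
  proof (rule eq_mat_by_mult_vecI[of _ k d])
    fix x :: "'a vec" assume x: "x \<in> carrier_vec d"
    have "M *\<^sub>v x \<in> V"
      using onbM x unfolding onb_mat_def by blast
    then show "(L * X) *\<^sub>v x = M *\<^sub>v x"
      using assoc_mult_mat_vec[OF L X x] assoc_mult_mat_vec[OF mat_adjoint_carrier[OF L] M x]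
        onb_mat_proj_fixes[OF onbL] unfolding X_def by simp
  qed (use L X M in auto)
  have "Y * X = mat_adjoint M * (L * X)"
    using L M X unfolding Y_def by (simp add: assoc_mult_mat[of _ d k _ d _ d])
  then have "Y * X = 1\<^sub>m d"
    unfolding LX MM .
  then have XY: "X * Y = 1\<^sub>m d"
    using mat_mult_left_right_inverse[OF Y X] by blast
  have "mat_adjoint X = Y"
    using L M mat_adjoint_mult[of "mat_adjoint L" d k M d] unfolding X_def Y_def by simp
  then have "M * mat_adjoint M = (L * X) * (Y * mat_adjoint L)"
    using mat_adjoint_mult[OF L X] unfolding LX by simp
  also have "\<dots> = L * ((X * Y) * mat_adjoint L)"
    using assoc_mult_mat[OF L X, of "Y * mat_adjoint L" k]
      assoc_mult_mat[OF X Y, of "mat_adjoint L" k] L Y by simp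
  finally show ?thesis
    using L unfolding XY by simp
qed

section \<open>Projections onto orthogonal complements\<close>

lemma onb_mat_basis_mat: "subspace_dim k d V \<Longrightarrow> onb_mat k d V (basis_mat k d V)"
  unfolding subspace_dim_def basis_mat_def by (rule someI_ex)

lemma proj_mat_carrier: "subspace_dim k d V \<Longrightarrow> proj_mat k d V \<in> carrier_mat k k"
  using onb_mat_basis_mat unfolding proj_mat_def onb_mat_def by fastforce

lemma subspace_dim_perp:
  fixes W :: "'a :: conjugatable_euclidean_field vec set"
  assumes "subspace_dim k m W" and "m \<le> k"
  shows "subspace_dim k (k - m) (perp k W)"
  using exists_onb_mat_perp[OF onb_mat_basis_mat[OF assms(1)] assms(2)]
  unfolding subspace_dim_def by blast

lemma proj_mat_perp:
  fixes W :: "'a :: conjugatable_euclidean_field vec set"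
  assumes W: "subspace_dim k m W" and "m \<le> k"
  shows "proj_mat k (k - m) (perp k W) = 1\<^sub>m k - proj_mat k m W"
proof -
  obtain L' where onb': "onb_mat k (k - m) (perp k W) L'"
    and resolution: "proj_mat k m W + L' * mat_adjoint L' = 1\<^sub>m k"
    using exists_onb_mat_perp[OF onb_mat_basis_mat[OF W] \<open>m \<le> k\<close>]
    unfolding proj_mat_def by blast
  have proj: "proj_mat k (k - m) (perp k W) = L' * mat_adjoint L'"
    unfolding proj_mat_def
    using onb_mat_proj_unique[OF onb_mat_basis_mat[OF subspace_dim_perp[OF assms]] onb'] .
  have P: "proj_mat k m W \<in> carrier_mat k k" and Q: "L' * mat_adjoint L' \<in> carrier_mat k k"
    using proj_mat_carrier[OF W] onb' unfolding onb_mat_def by auto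
  show ?thesis
    unfolding proj
  proof (rule eq_matI)
    fix i j assume "i < dim_row (1\<^sub>m k - proj_mat k m W)" "j < dim_col (1\<^sub>m k - proj_mat k m W)"
    then have ij: "i < k" "j < k"
      using P by auto
    then have "proj_mat k m W $$ (i, j) + (L' * mat_adjoint L') $$ (i, j) = 1\<^sub>m k $$ (i, j)"
      using arg_cong[OF resolution, of "\<lambda>A. A $$ (i, j)"] P Q
      by (subst (asm) index_add_mat) auto
    then show "(L' * mat_adjoint L') $$ (i, j) = (1\<^sub>m k - proj_mat k m W) $$ (i, j)"
      using ij P by (simp add: eq_diff_eq add.commute)
  qed (use P Q in auto)
qed

lemma mat_trace_proj_mat:
  "subspace_dim k d V \<Longrightarrow> mat_trace (proj_mat k d V) = of_nat d"
  using onb_mat_basis_mat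
    mat_trace_mult_comm[of "basis_mat k d V" k d "mat_adjoint (basis_mat k d V)"]
  unfolding proj_mat_def onb_mat_def mat_trace_def by fastforce

lemma mat_trace_cross_mat:
  assumes "subspace_dim k d V" and "subspace_dim k d U"
  shows "mat_trace (cross_mat k d V U) = mat_trace (proj_mat k d V * proj_mat k d U)"
proof -
  define L M where "L = basis_mat k d V" and "M = basis_mat k d U"
  have L: "L \<in> carrier_mat k d" and M: "M \<in> carrier_mat k d"
    using assms onb_mat_basis_mat unfolding L_def M_def onb_mat_def by blast+
  have "mat_trace (cross_mat k d V U) = mat_trace (L * (mat_adjoint L * M * mat_adjoint M))"
    unfolding cross_mat_def L_def[symmetric] M_def[symmetric] using L M
    by (intro mat_trace_mult_comm) auto
  also have "L * (mat_adjoint L * M * mat_adjoint M) = (L * mat_adjoint L) * (M * mat_adjoint M)"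
    using L M by (simp add: assoc_mult_mat[of _ k d _ k _ k] assoc_mult_mat[of _ d k _ d _ k])
  finally show ?thesis
    unfolding proj_mat_def L_def M_def .
qed

lemma mat_trace_proj_mat_perp_mult:
  fixes V U :: "'a :: conjugatable_euclidean_field vec set"
  assumes V: "subspace_dim k m V" and U: "subspace_dim k m U" and "m \<le> k"
  shows "mat_trace (proj_mat k (k - m) (perp k V) * proj_mat k (k - m) (perp k U))
    = of_nat k - 2 * of_nat m + mat_trace (proj_mat k m V * proj_mat k m U)"
  unfolding proj_mat_perp[OF V \<open>m \<le> k\<close>] proj_mat_perp[OF U \<open>m \<le> k\<close>]
  using mat_trace_one_minus_mult[OF proj_mat_carrier[OF V] proj_mat_carrier[OF U]]
    mat_trace_proj_mat[OF V] mat_trace_proj_mat[OF U] by simp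

lemma chordal_sq_perp:
  fixes V U :: "'a :: conjugatable_euclidean_field vec set"
  assumes "subspace_dim k m V" and "subspace_dim k m U" and "m \<le> k"
  shows "chordal_sq k (k - m) (perp k V) (perp k U) = chordal_sq k m V U"
  unfolding chordal_sq_def using mat_trace_proj_mat_perp_mult[OF assms] \<open>m \<le> k\<close>
  by (simp add: of_nat_diff)

lemma mat_trace_cross_mat_perp:
  fixes V U :: "'a :: conjugatable_euclidean_field vec set"
  assumes V: "subspace_dim k m V" and U: "subspace_dim k m U" and "m \<le> k"
  shows "mat_trace (cross_mat k (k - m) (perp k V) (perp k U))
    = of_nat k - 2 * of_nat m + mat_trace (cross_mat k m V U)"
  using mat_trace_cross_mat[OF subspace_dim_perp[OF V \<open>m \<le> k\<close>] subspace_dim_perp[OF U \<open>m \<le> k\<close>]]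
    mat_trace_cross_mat[OF V U] mat_trace_proj_mat_perp_mult[OF assms] by simp

section \<open>Characteristic polynomials\<close>

lemma char_poly_nonzero: "A \<in> carrier_mat n n \<Longrightarrow> char_poly A \<noteq> 0"
  using degree_monic_char_poly[of A n] by auto

lemma pcompose_one_minus_one_minus:
  "pcompose (pcompose p [:1, -1:]) [:1, -1:] = (p :: 'a :: comm_ring_1 poly)"
  by (simp add: pcompose_assoc[symmetric] pcompose_pCons)

lemma order_pcompose_one_minus_ge:
  fixes p :: "'a :: idom poly"
  assumes "pcompose p [:1, -1:] \<noteq> 0"
  shows "Polynomial.order (1 - e) p \<le> Polynomial.order e (pcompose p [:1, -1:])"
proof -
  define n where "n = Polynomial.order (1 - e) p"
  obtain s where p: "p = [:-(1 - e), 1:] ^ n * s"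
    using Polynomial.order_1[of "1 - e" p] unfolding n_def by (elim dvdE)
  have "pcompose [:-(1 - e), 1:] [:1, -1:] = - [:-e, 1:]"
    by (simp add: pcompose_pCons)
  then have "pcompose p [:1, -1:] = (- [:-e, 1:]) ^ n * pcompose s [:1, -1:]"
    unfolding p by (simp only: pcompose_hom.hom_mult pcompose_hom.hom_power)
  moreover have "[:-e, 1:] ^ n dvd (- [:-e, 1:]) ^ n"
    unfolding power_minus[of "[:-e, 1:]"] by (rule dvd_triv_right)
  ultimately have "[:-e, 1:] ^ n dvd pcompose p [:1, -1:]"
    by (metis dvd_mult2)
  then show ?thesis
    using assms unfolding n_def Polynomial.order_divides by simp
qed

lemma order_pcompose_one_minus:
  fixes p :: "'a :: idom poly"
  assumes "p \<noteq> 0"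
  shows "Polynomial.order e (pcompose p [:1, -1:]) = Polynomial.order (1 - e) p"
proof (rule antisym)
  have "pcompose p [:1, -1:] \<noteq> 0"
    using assms pcompose_one_minus_one_minus[of p] by auto
  then show "Polynomial.order (1 - e) p \<le> Polynomial.order e (pcompose p [:1, -1:])"
    by (rule order_pcompose_one_minus_ge)
  show "Polynomial.order e (pcompose p [:1, -1:]) \<le> Polynomial.order (1 - e) p"
    using order_pcompose_one_minus_ge[of "pcompose p [:1, -1:]" "1 - e"] assms
    by (simp add: pcompose_one_minus_one_minus)
qed

lemma char_poly_one_minus:
  fixes M :: "'a :: comm_ring_1 mat"
  assumes M: "M \<in> carrier_mat n n"
  shows "char_poly (1\<^sub>m n - M) = (-1) ^ n * pcompose (char_poly M) [:1, -1:]"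
proof -
  have "char_poly_matrix (1\<^sub>m n - M)
    = (-1) \<cdot>\<^sub>m map_mat (\<lambda>p. pcompose p [:1, -1:]) (char_poly_matrix M)"
    unfolding char_poly_matrix_def using M
    by (intro eq_matI) (auto simp: pcompose_pCons pcompose_add one_pCons)
  then show ?thesis
    using M carrier_matD(2)[OF char_poly_matrix_closed[OF M]] unfolding char_poly_def
    by (simp add: det_smult comm_ring_hom.hom_det[OF pcompose_hom.comm_ring_hom_axioms])
qed

lemma order_char_poly_one_minus:
  fixes M :: "'a :: idom mat"
  assumes M: "M \<in> carrier_mat n n"
  shows "Polynomial.order e (char_poly (1\<^sub>m n - M)) = Polynomial.order (1 - e) (char_poly M)"
proof -
  have "Polynomial.order e ((-1) ^ n * q) = Polynomial.order e q" for q :: "'a poly"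
    by (cases "even n") auto
  then show ?thesis
    using order_pcompose_one_minus[OF char_poly_nonzero[OF M]] unfolding char_poly_one_minus[OF M]
    by simp
qed

lemma det_four_block_smult_one_left:
  fixes a :: "'a :: idom mat"
  assumes a: "a \<in> carrier_mat n p" and b: "b \<in> carrier_mat p n"
  shows "det (four_block_mat (x \<cdot>\<^sub>m 1\<^sub>m n) a b (1\<^sub>m p)) = det (x \<cdot>\<^sub>m 1\<^sub>m n - a * b)"
proof -
  define N where "N = four_block_mat (x \<cdot>\<^sub>m 1\<^sub>m n) a b (1\<^sub>m p)"
  define E where "E = four_block_mat (1\<^sub>m n) (- a) (0\<^sub>m p n) (1\<^sub>m p)"
  have N: "N \<in> carrier_mat (n + p) (n + p)" and E: "E \<in> carrier_mat (n + p) (n + p)"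
    unfolding N_def E_def using a b by auto
  have "E * N = four_block_mat (x \<cdot>\<^sub>m 1\<^sub>m n - a * b) (0\<^sub>m n p) b (1\<^sub>m p)"
    unfolding E_def N_def using a b
    by (subst mult_four_block_mat[of _ n n _ p _ p _ _ n _ p]) (auto intro!: eq_matI)
  moreover have "det (four_block_mat (x \<cdot>\<^sub>m 1\<^sub>m n - a * b) (0\<^sub>m n p) b (1\<^sub>m p))
    = det (x \<cdot>\<^sub>m 1\<^sub>m n - a * b)"
    using a b by (subst det_four_block_mat_upper_right_zero[of _ n _ p]) auto
  ultimately have "det E * det N = det (x \<cdot>\<^sub>m 1\<^sub>m n - a * b)"
    using det_mult[OF E N] by simp
  moreover have "det E = 1"
    unfolding E_def using a by (simp add: det_four_block_mat_lower_left_zero[of _ n _ p])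
  ultimately show ?thesis
    unfolding N_def by simp
qed

lemma det_four_block_smult_one_right:
  fixes a :: "'a :: idom mat"
  assumes a: "a \<in> carrier_mat n p" and b: "b \<in> carrier_mat p n"
  shows "x ^ p * det (four_block_mat (x \<cdot>\<^sub>m 1\<^sub>m n) a b (1\<^sub>m p))
    = x ^ n * det (x \<cdot>\<^sub>m 1\<^sub>m p - b * a)"
proof -
  define N where "N = four_block_mat (x \<cdot>\<^sub>m 1\<^sub>m n) a b (1\<^sub>m p)"
  define E where "E = four_block_mat (1\<^sub>m n) (0\<^sub>m n p) (- b) (x \<cdot>\<^sub>m 1\<^sub>m p)"
  have N: "N \<in> carrier_mat (n + p) (n + p)" and E: "E \<in> carrier_mat (n + p) (n + p)"
    unfolding N_def E_def using a b by auto
  have "E * N = four_block_mat (x \<cdot>\<^sub>m 1\<^sub>m n) a (0\<^sub>m p n) (x \<cdot>\<^sub>m 1\<^sub>m p - b * a)"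
    unfolding E_def N_def using a b
    by (subst mult_four_block_mat[of _ n n _ p _ p _ _ n _ p]) (auto intro!: eq_matI)
  moreover have "det (four_block_mat (x \<cdot>\<^sub>m 1\<^sub>m n) a (0\<^sub>m p n) (x \<cdot>\<^sub>m 1\<^sub>m p - b * a))
    = x ^ n * det (x \<cdot>\<^sub>m 1\<^sub>m p - b * a)"
    using a b by (subst det_four_block_mat_lower_left_zero[of _ n _ p]) auto
  ultimately have "det E * det N = x ^ n * det (x \<cdot>\<^sub>m 1\<^sub>m p - b * a)"
    using det_mult[OF E N] by simp
  moreover have "det E = x ^ p"
    unfolding E_def using b by (simp add: det_four_block_mat_upper_right_zero[of _ n _ p])
  ultimately show ?thesis
    unfolding N_def by simp
qed

lemma char_poly_eq_det:
  fixes A :: "'a :: comm_ring_1 mat"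
  assumes "A \<in> carrier_mat n n"
  shows "char_poly A = det ([:0, 1:] \<cdot>\<^sub>m 1\<^sub>m n - map_mat (\<lambda>c. [:c:]) A)"
  unfolding char_poly_def char_poly_matrix_def using assms
  by (intro arg_cong[where f = det] eq_matI) auto

lemma char_poly_mult_commute:
  fixes A :: "'a :: idom mat"
  assumes A: "A \<in> carrier_mat n p" and B: "B \<in> carrier_mat p n"
  shows "[:0, 1:] ^ p * char_poly (A * B) = [:0, 1:] ^ n * char_poly (B * A)"
proof -
  interpret const_poly: comm_ring_hom "\<lambda>c :: 'a. [:c:]"
    by unfold_locales auto
  define a b where "a = map_mat (\<lambda>c. [:c:]) A" and "b = map_mat (\<lambda>c. [:c:]) B"
  have a: "a \<in> carrier_mat n p" and b: "b \<in> carrier_mat p n"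
    unfolding a_def b_def using A B by auto
  have "char_poly (A * B) = det ([:0, 1:] \<cdot>\<^sub>m 1\<^sub>m n - a * b)"
    using char_poly_eq_det[of "A * B" n] const_poly.mat_hom_mult[OF A B] A B
    unfolding a_def b_def by simp
  moreover have "char_poly (B * A) = det ([:0, 1:] \<cdot>\<^sub>m 1\<^sub>m p - b * a)"
    using char_poly_eq_det[of "B * A" p] const_poly.mat_hom_mult[OF B A] A B
    unfolding a_def b_def by simp
  ultimately show ?thesis
    using det_four_block_smult_one_left[OF a b] det_four_block_smult_one_right[OF a b] by simp
qed

lemma order_char_poly_mult_commute:
  fixes A :: "'a :: idom mat"
  assumes A: "A \<in> carrier_mat n p" and B: "B \<in> carrier_mat p n"
  shows "Polynomial.order e (char_poly (A * B)) + (if e = 0 then p else 0)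
    = Polynomial.order e (char_poly (B * A)) + (if e = 0 then n else 0)"
proof -
  have order_x: "Polynomial.order e ([:0, 1:] ^ q :: 'a poly) = (if e = 0 then q else 0)" for q
    using order_power_n_n[of 0 q] by (auto intro: order_0I)
  have "char_poly (A * B) \<noteq> 0" "char_poly (B * A) \<noteq> 0"
    using A B by (auto intro!: char_poly_nonzero)
  then show ?thesis
    using arg_cong[OF char_poly_mult_commute[OF A B], of "Polynomial.order e"]
    by (simp add: order_mult order_x add.commute)
qed

lemma mult_one_minus_mult_mult:
  fixes F :: "'a :: comm_ring_1 mat"
  assumes F: "F \<in> carrier_mat t k" and M: "M \<in> carrier_mat k m" and N: "N \<in> carrier_mat m k"
    and G: "G \<in> carrier_mat k u"
  shows "F * (1\<^sub>m k - M * N) * G = F * G - (F * M) * (N * G)"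
proof -
  have MN: "M * N \<in> carrier_mat k k" and FM: "F * M \<in> carrier_mat t m"
    using F M N by auto
  have "F * (1\<^sub>m k - M * N) = F - F * (M * N)"
    using mult_minus_distrib_mat[OF F one_carrier_mat MN] F by simp
  moreover have "F * (M * N) = (F * M) * N"
    using assoc_mult_mat[OF F M N] by simp
  ultimately have "F * (1\<^sub>m k - M * N) * G = F * G - (F * M) * N * G"
    using minus_mult_distrib_mat[of F t k "(F * M) * N" G u] F FM N G by simp
  then show ?thesis
    using assoc_mult_mat[OF FM N G] by simp
qed

lemma order_char_poly_cross_complement:
  fixes L M L' :: "'a :: conjugatable_field mat"
  assumes L: "L \<in> carrier_mat k m" and M: "M \<in> carrier_mat k m" and L': "L' \<in> carrier_mat k s"
    and MM: "mat_adjoint M * M = 1\<^sub>m m" and L'L': "mat_adjoint L' * L' = 1\<^sub>m s"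
    and perp: "L' * mat_adjoint L' = 1\<^sub>m k - L * mat_adjoint L"
  shows "Polynomial.order e (char_poly (mat_adjoint L' * (1\<^sub>m k - M * mat_adjoint M) * L'))
      + (if e = 1 then m else 0)
    = Polynomial.order e (char_poly (mat_adjoint L * M * mat_adjoint M * L))
      + (if e = 1 then s else 0)"
proof -
  define A Y where "A = mat_adjoint L * M" and "Y = mat_adjoint L' * M"
  have A: "A \<in> carrier_mat m m" and Y: "Y \<in> carrier_mat s m"
    unfolding A_def Y_def using L M L' by auto
  have adjA: "mat_adjoint A = mat_adjoint M * L"
    unfolding A_def using mat_adjoint_mult[OF mat_adjoint_carrier[OF L] M] by simp
  have adjY: "mat_adjoint Y = mat_adjoint M * L'"
    unfolding Y_def using mat_adjoint_mult[OF mat_adjoint_carrier[OF L'] M] by simp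
  have cross: "mat_adjoint L * M * mat_adjoint M * L = A * mat_adjoint A"
    unfolding adjA
    using assoc_mult_mat[OF A[unfolded A_def] mat_adjoint_carrier[OF M] L] unfolding A_def by simp
  have cross': "mat_adjoint L' * (1\<^sub>m k - M * mat_adjoint M) * L' = 1\<^sub>m s - Y * mat_adjoint Y"
    unfolding adjY unfolding Y_def
    using mult_one_minus_mult_mult[of "mat_adjoint L'" s k M m "mat_adjoint M" L' s] L M L' L'L'
    by simp
  have "mat_adjoint Y * Y = mat_adjoint M * (L' * mat_adjoint L') * M"
    unfolding adjY unfolding Y_def
    using assoc_mult_mat[OF mat_adjoint_carrier[OF M] L' mat_adjoint_carrier[OF L']]
      assoc_mult_mat[OF mult_carrier_mat[OF mat_adjoint_carrier[OF M] L']
        mat_adjoint_carrier[OF L'] M]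
    by simp
  also have "\<dots> = 1\<^sub>m m - mat_adjoint A * A"
    unfolding perp adjA unfolding A_def
    using mult_one_minus_mult_mult[of "mat_adjoint M" m k L m "mat_adjoint L" M m] L M MM by simp
  finally have YY: "mat_adjoint Y * Y = 1\<^sub>m m - mat_adjoint A * A" .
  have AA: "mat_adjoint A * A \<in> carrier_mat m m" and YY': "Y * mat_adjoint Y \<in> carrier_mat s s"
    using A Y by auto
  have "Polynomial.order e (char_poly (A * mat_adjoint A))
    = Polynomial.order e (char_poly (mat_adjoint A * A))"
    using order_char_poly_mult_commute[OF A mat_adjoint_carrier[OF A], of e] by simp
  also have "\<dots> = Polynomial.order (1 - e) (char_poly (mat_adjoint Y * Y))"
    unfolding YY order_char_poly_one_minus[OF AA] by simp
  finally have "Polynomial.order e (char_poly (A * mat_adjoint A))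
    = Polynomial.order (1 - e) (char_poly (mat_adjoint Y * Y))" .
  moreover have "Polynomial.order e (char_poly (1\<^sub>m s - Y * mat_adjoint Y))
    = Polynomial.order (1 - e) (char_poly (Y * mat_adjoint Y))"
    by (rule order_char_poly_one_minus[OF YY'])
  moreover have "(1 - e = 0) = (e = 1)"
    by simp
  ultimately show ?thesis
    using order_char_poly_mult_commute[OF Y mat_adjoint_carrier[OF Y], of "1 - e"]
    unfolding cross cross' by simp
qed

section \<open>Complements of families of subspaces\<close>

lemma order_char_poly_cross_mat_perp:
  fixes V U :: "'a :: conjugatable_euclidean_field vec set"
  assumes V: "subspace_dim k m V" and U: "subspace_dim k m U" and "m \<le> k"
  shows "Polynomial.order e (char_poly (cross_mat k (k - m) (perp k V) (perp k U)))
      + (if e = 1 then m else 0)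
    = Polynomial.order e (char_poly (cross_mat k m V U)) + (if e = 1 then k - m else 0)"
proof -
  define L M L' M' where "L = basis_mat k m V" and "M = basis_mat k m U"
    and "L' = basis_mat k (k - m) (perp k V)" and "M' = basis_mat k (k - m) (perp k U)"
  have L: "L \<in> carrier_mat k m" and M: "M \<in> carrier_mat k m" and MM: "mat_adjoint M * M = 1\<^sub>m m"
    using onb_mat_basis_mat[OF V] onb_mat_basis_mat[OF U] unfolding L_def M_def onb_mat_def
    by auto
  have L': "L' \<in> carrier_mat k (k - m)" and M': "M' \<in> carrier_mat k (k - m)"
    and L'L': "mat_adjoint L' * L' = 1\<^sub>m (k - m)"
    using onb_mat_basis_mat[OF subspace_dim_perp[OF V \<open>m \<le> k\<close>]]
      onb_mat_basis_mat[OF subspace_dim_perp[OF U \<open>m \<le> k\<close>]]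
    unfolding L'_def M'_def onb_mat_def by auto
  have "cross_mat k (k - m) (perp k V) (perp k U) = mat_adjoint L' * (M' * mat_adjoint M') * L'"
    unfolding cross_mat_def L'_def[symmetric] M'_def[symmetric]
    using assoc_mult_mat[OF mat_adjoint_carrier[OF L'] M' mat_adjoint_carrier[OF M']] by simp
  also have "M' * mat_adjoint M' = 1\<^sub>m k - M * mat_adjoint M"
    using proj_mat_perp[OF U \<open>m \<le> k\<close>] unfolding proj_mat_def M_def M'_def .
  finally show ?thesis
    using order_char_poly_cross_complement[OF L M L' MM L'L', of e]
      proj_mat_perp[OF V \<open>m \<le> k\<close>]
    unfolding proj_mat_def cross_mat_def L_def[symmetric] M_def[symmetric] L'_def[symmetric]
    by simp
qed

lemma same_eigenvalues_cross_mat_perp_iff: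
  fixes V U V' U' :: "'a :: conjugatable_euclidean_field vec set"
  assumes "subspace_dim k m V" "subspace_dim k m U" "subspace_dim k m V'" "subspace_dim k m U'"
    and "m \<le> k"
  shows "same_eigenvalues (cross_mat k (k - m) (perp k V) (perp k U))
      (cross_mat k (k - m) (perp k V') (perp k U'))
    \<longleftrightarrow> same_eigenvalues (cross_mat k m V U) (cross_mat k m V' U')"
  unfolding same_eigenvalues_def
  using order_char_poly_cross_mat_perp[OF assms(1,2,5)]
    order_char_poly_cross_mat_perp[OF assms(3,4,5)]
  by (metis add_right_cancel)

lemma tight_bound_complement_pos:
  fixes A :: "'a :: conjugatable_euclidean_field"
  assumes "0 < d" "d < k" "0 < A" "of_nat k * A = of_nat n * of_nat d"
  shows "0 < of_nat n - A"
proof -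
  have "0 < of_nat k * A"
    using assms of_nat_mult_pos_iff[of k A] by simp
  then have "0 < n"
    using assms(4) by (cases n) auto
  then have "0 < of_nat (n * (k - d)) * (1 :: 'a)"
    using assms zero_less_one_conjugatable of_nat_mult_pos_iff[of "n * (k - d)" "1 :: 'a"] by simp
  also have "of_nat (n * (k - d)) * 1 = of_nat k * (of_nat n - A)"
    using assms by (simp add: of_nat_diff algebra_simps)
  finally show ?thesis
    using assms of_nat_mult_pos_iff[of k "of_nat n - A"] by simp
qed

lemma tight_sum_complement:
  fixes Q Q' :: "nat \<Rightarrow> 'a :: conjugatable_euclidean_field mat"
  assumes I: "finite I" and Q: "\<And>i. i \<in> I \<Longrightarrow> Q i \<in> carrier_mat k k"
    and Q': "\<And>i. i \<in> I \<Longrightarrow> Q' i = 1\<^sub>m k - Q i"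
    and trace: "\<And>i. i \<in> I \<Longrightarrow> mat_trace (Q i) = of_nat d" and "0 < d" "d < k"
    and tight: "mat k k (\<lambda>(a, b). \<Sum>i\<in>I. Q i $$ (a, b)) = A \<cdot>\<^sub>m 1\<^sub>m k" and "0 < A"
  shows "\<exists>A'. 0 < A' \<and> mat k k (\<lambda>(a, b). \<Sum>i\<in>I. Q' i $$ (a, b)) = A' \<cdot>\<^sub>m 1\<^sub>m k"
proof (intro exI conjI)
  have "of_nat k * A = mat_trace (A \<cdot>\<^sub>m 1\<^sub>m k)"
    unfolding mat_trace_def by simp
  also have "\<dots> = (\<Sum>a<k. \<Sum>i\<in>I. Q i $$ (a, a))"
    unfolding tight[symmetric] mat_trace_def by simp
  also have "\<dots> = (\<Sum>i\<in>I. mat_trace (Q i))"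
    unfolding mat_trace_def using Q by (subst sum.swap) (auto intro!: sum.cong)
  also have "\<dots> = of_nat (card I) * of_nat d"
    using trace by simp
  finally show "0 < of_nat (card I) - A"
    using tight_bound_complement_pos \<open>0 < d\<close> \<open>d < k\<close> \<open>0 < A\<close> by blast
  have "(\<Sum>i\<in>I. Q' i $$ (a, b)) = (of_nat (card I) - A) * of_bool (a = b)"
    if ab: "a < k" "b < k" for a b
  proof -
    have "(\<Sum>i\<in>I. Q' i $$ (a, b)) = (\<Sum>i\<in>I. of_bool (a = b) - Q i $$ (a, b))"
    proof (rule sum.cong[OF refl])
      fix i assume "i \<in> I"
      then show "Q' i $$ (a, b) = of_bool (a = b) - Q i $$ (a, b)"
        using Q[OF \<open>i \<in> I\<close>] Q'[OF \<open>i \<in> I\<close>] ab by simp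
    qed
    also have "\<dots> = of_nat (card I) * of_bool (a = b) - A * of_bool (a = b)"
      using arg_cong[OF tight, of "\<lambda>X. X $$ (a, b)"] ab by (simp add: sum_subtractf)
    finally show ?thesis
      by (simp add: algebra_simps)
  qed
  then show "mat k k (\<lambda>(a, b). \<Sum>i\<in>I. Q' i $$ (a, b)) = (of_nat (card I) - A) \<cdot>\<^sub>m 1\<^sub>m k"
    by (intro eq_matI) auto
qed

lemma tight_fusion_frame_perp_iff:
  fixes W :: "nat \<Rightarrow> 'a :: conjugatable_euclidean_field vec set"
  assumes W: "\<forall>i\<in>{1..n}. subspace_dim k m (W i)" and "0 < m" "m < k"
  shows "tight_fusion_frame k (k - m) n (\<lambda>i. perp k (W i)) \<longleftrightarrow> tight_fusion_frame k m n W"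
proof -
  define P P' where "P i = proj_mat k m (W i)" and "P' i = proj_mat k (k - m) (perp k (W i))" for i
  have Wi: "subspace_dim k m (W i)" if "i \<in> {1..n}" for i
    using W that by blast
  have W'i: "subspace_dim k (k - m) (perp k (W i))" if "i \<in> {1..n}" for i
    using subspace_dim_perp[OF Wi[OF that]] \<open>m < k\<close> by simp
  have P: "P i \<in> carrier_mat k k" and trace: "mat_trace (P i) = of_nat m"
    and P': "P' i = 1\<^sub>m k - P i" if "i \<in> {1..n}" for i
    using proj_mat_carrier[OF Wi[OF that]] mat_trace_proj_mat[OF Wi[OF that]]
      proj_mat_perp[OF Wi[OF that]] \<open>m < k\<close>
    unfolding P_def P'_def by auto
  have P'_carrier: "P' i \<in> carrier_mat k k" and trace': "mat_trace (P' i) = of_nat (k - m)"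
    and P'': "P i = 1\<^sub>m k - P' i" if "i \<in> {1..n}" for i
    using proj_mat_carrier[OF W'i[OF that]] mat_trace_proj_mat[OF W'i[OF that]] P[OF that]
      P'[OF that]
    unfolding P'_def by (auto intro!: eq_matI)
  show ?thesis
    unfolding tight_fusion_frame_def P_def[symmetric] P'_def[symmetric]
  proof (intro iffI; elim exE conjE)
    fix A assume "0 < A" "mat k k (\<lambda>(a, b). \<Sum>i\<in>{1..n}. P' i $$ (a, b)) = A \<cdot>\<^sub>m 1\<^sub>m k"
    then show "\<exists>A. 0 < A \<and> mat k k (\<lambda>(a, b). \<Sum>i\<in>{1..n}. P i $$ (a, b)) = A \<cdot>\<^sub>m 1\<^sub>m k"
      using \<open>0 < m\<close> \<open>m < k\<close>
      by (intro tight_sum_complement[of "{1..n}" P' k P "k - m"]) (auto simp: P'_carrier P'' trace')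
  next
    fix A assume "0 < A" "mat k k (\<lambda>(a, b). \<Sum>i\<in>{1..n}. P i $$ (a, b)) = A \<cdot>\<^sub>m 1\<^sub>m k"
    then show "\<exists>A. 0 < A \<and> mat k k (\<lambda>(a, b). \<Sum>i\<in>{1..n}. P' i $$ (a, b)) = A \<cdot>\<^sub>m 1\<^sub>m k"
      using \<open>0 < m\<close> \<open>m < k\<close>
      by (intro tight_sum_complement[of "{1..n}" P k P' m]) (auto simp: P P' trace)
  qed
qed

lemma equichordal_perp_iff:
  fixes W :: "nat \<Rightarrow> 'a :: conjugatable_euclidean_field vec set"
  assumes W: "\<forall>i\<in>{1..n}. subspace_dim k m (W i)" and "m \<le> k"
  shows "equichordal k (k - m) n (\<lambda>i. perp k (W i)) \<longleftrightarrow> equichordal k m n W"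
proof -
  define shift :: 'a where "shift = of_nat k - 2 * of_nat m"
  have trace: "mat_trace (cross_mat k (k - m) (perp k (W i)) (perp k (W j)))
      = shift + mat_trace (cross_mat k m (W i) (W j))"
    if "i \<in> {1..n}" "j \<in> {1..n}" for i j
    using mat_trace_cross_mat_perp W that \<open>m \<le> k\<close> unfolding shift_def by blast
  show ?thesis
  proof
    assume "equichordal k (k - m) n (\<lambda>i. perp k (W i))"
    then obtain c where "\<forall>i\<in>{1..n}. \<forall>j\<in>{1..n}. i \<noteq> j \<longrightarrow>
        shift + mat_trace (cross_mat k m (W i) (W j)) = c"
      unfolding equichordal_def using trace by auto
    then show "equichordal k m n W"
      unfolding equichordal_def by (intro exI[of _ "c - shift"]) (auto simp: algebra_simps)
  next
    assume "equichordal k m n W"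
    then obtain c where "\<forall>i\<in>{1..n}. \<forall>j\<in>{1..n}. i \<noteq> j \<longrightarrow> mat_trace (cross_mat k m (W i) (W j)) = c"
      unfolding equichordal_def by blast
    then show "equichordal k (k - m) n (\<lambda>i. perp k (W i))"
      unfolding equichordal_def using trace by (intro exI[of _ "shift + c"]) auto
  qed
qed

lemma strongly_simplicial_perp_iff:
  fixes W :: "nat \<Rightarrow> 'a :: conjugatable_euclidean_field vec set"
  assumes "\<forall>i\<in>{1..n}. subspace_dim k m (W i)" and "m \<le> k"
  shows "strongly_simplicial k (k - m) n (\<lambda>i. perp k (W i)) \<longleftrightarrow> strongly_simplicial k m n W"
proof -
  have "same_eigenvalues (cross_mat k (k - m) (perp k (W i)) (perp k (W j)))
      (cross_mat k (k - m) (perp k (W i')) (perp k (W j')))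
    \<longleftrightarrow> same_eigenvalues (cross_mat k m (W i) (W j)) (cross_mat k m (W i') (W j'))"
    if "i \<in> {1..n}" "j \<in> {1..n}" "i' \<in> {1..n}" "j' \<in> {1..n}" for i j i' j'
    using same_eigenvalues_cross_mat_perp_iff assms that by blast
  then show ?thesis
    unfolding strongly_simplicial_def by blast
qed

lemma orthoplectic_packing_perp_iff:
  fixes W :: "nat \<Rightarrow> 'a :: conjugatable_euclidean_field vec set"
  assumes "\<forall>i\<in>{1..n}. subspace_dim k m (W i)" and "m \<le> k"
  shows "orthoplectic_packing Z k (k - m) n (\<lambda>i. perp k (W i)) \<longleftrightarrow> orthoplectic_packing Z k m n W"
proof -
  have chord: "chordal_sq k (k - m) (perp k (W i)) (perp k (W j)) = chordal_sq k m (W i) (W j)"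
    if "i \<in> {1..n}" "j \<in> {1..n}" for i j
    using chordal_sq_perp assms that by blast
  have "(\<forall>i\<in>{1..n}. \<forall>j\<in>{1..n}. i \<noteq> j \<longrightarrow>
      c \<le> chordal_sq k (k - m) (perp k (W i)) (perp k (W j)))
    \<longleftrightarrow> (\<forall>i\<in>{1..n}. \<forall>j\<in>{1..n}. i \<noteq> j \<longrightarrow> c \<le> chordal_sq k m (W i) (W j))"
    and "(\<exists>i\<in>{1..n}. \<exists>j\<in>{1..n}. i \<noteq> j \<and>
      chordal_sq k (k - m) (perp k (W i)) (perp k (W j)) = c)
    \<longleftrightarrow> (\<exists>i\<in>{1..n}. \<exists>j\<in>{1..n}. i \<noteq> j \<and> chordal_sq k m (W i) (W j) = c)" for c
    using chord by auto
  moreover have "(k - m) * (k - (k - m)) = m * (k - m)"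
    using \<open>m \<le> k\<close> by simp
  ultimately show ?thesis
    unfolding orthoplectic_packing_def Let_def by (simp only:)
qed

theorem complement_duality_of_subspaces:
  fixes W :: "nat \<Rightarrow> 'a :: conjugatable_euclidean_field vec set"
  assumes "0 < m" and "m < k" and "\<forall>i\<in>{1..n}. subspace_dim k m (W i)"
  shows "complement_duality Z k m n W"
proof -
  have mk: "m \<le> k"
    using \<open>m < k\<close> by simp
  then have "\<forall>i\<in>{1..n}. subspace_dim k (k - m) (perp k (W i))"
    using subspace_dim_perp assms(3) by blast
  then show ?thesis
    using tight_fusion_frame_perp_iff[OF assms(3,1,2)]
      equichordal_perp_iff[OF assms(3) mk] strongly_simplicial_perp_iff[OF assms(3) mk]
      orthoplectic_packing_perp_iff[OF assms(3) mk]
    unfolding complement_duality_def Let_def by auto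
qed

theorem mainTheorem8:
  fixes k m n :: nat
  assumes "0 < m" and "m < k"
  shows "(\<forall>W :: nat \<Rightarrow> real vec set. (\<forall>i\<in>{1..n}. subspace_dim k m (W i)) \<longrightarrow>
            complement_duality (k * (k + 1) div 2) k m n W)
       \<and> (\<forall>W :: nat \<Rightarrow> complex vec set. (\<forall>i\<in>{1..n}. subspace_dim k m (W i)) \<longrightarrow>
            complement_duality (k ^ 2) k m n W)"
  by (auto intro: complement_duality_of_subspaces[OF assms])

end
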